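(* For every $p\in(0,1)$ and every $a>a_*=p^p(1-p)^{1-p}$, $\Upsilon_p(a)<0$, where $$\Upsilon_p(a)=\int_\beta^\alpha\frac{\eta_{p,a}(\kappa)}{\sqrt{Q_{p,a}(\kappa)}}\,d\kappa,$$ $$\eta_{p,a}(\kappa)=-(p+1)a\kappa^{1-p}-(2-p)a\kappa^{-1-p}+(1-p)^2(2p+1)\kappa^{p+1}+2(4p^2-4p+1)\kappa^{p-1}+p^2(3-2p)\kappa^{p-3},$$ $Q_{p,a}(\kappa)=a\kappa^{2(1-p)}-(1-p)^2\kappa^2-p^2$, and $\beta<\alpha$ are the two positive zeros of $Q_{p,a}$.
   Context: For $p\in(0,1)$ and $a>a_*$, $Q_{p,a}$ has exactly two positive zeros $\beta<\alpha$ and is positive between them; the integral is a convergent improper integral. (Geometrically, $\Upsilon_p(a)$ is the second variation of $\mathbf{\Theta}_p$ in the direction $\phi\equiv1$ along a half-period of the curvature of the $p$-elastic curve $\gamma_a$.) *)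

theory Defs
  imports "HOL-Analysis.Analysis"
begin

definition Qpa :: "real \<Rightarrow> real \<Rightarrow> real \<Rightarrow> real" where
  "Qpa p a \<kappa> = a * \<kappa> powr (2 * (1 - p)) - (1 - p)^2 * \<kappa>^2 - p^2"

definition eta :: "real \<Rightarrow> real \<Rightarrow> real \<Rightarrow> real" where
  "eta p a \<kappa> =
     - (p + 1) * a * \<kappa> powr (1 - p)
     - (2 - p) * a * \<kappa> powr (-1 - p)
     + (1 - p)^2 * (2 * p + 1) * \<kappa> powr (p + 1)
     + 2 * (4 * p^2 - 4 * p + 1) * \<kappa> powr (p - 1)
     + p^2 * (3 - 2 * p) * \<kappa> powr (p - 3)"

definition a_star :: "real \<Rightarrow> real" where
  "a_star p = p powr p * (1 - p) powr (1 - p)"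

text \<open>Upsilon over the interval between the zeros beta < alpha of Q (Lebesgue integral;
  the improper integral is absolutely convergent).\<close>
definition Upsilon :: "real \<Rightarrow> real \<Rightarrow> real \<Rightarrow> real \<Rightarrow> real" where
  "Upsilon p a \<beta> \<alpha> = (LBINT \<kappa>=\<beta>..\<alpha>. eta p a \<kappa> / sqrt (Qpa p a \<kappa>))"

end

theory Submission
  imports Defs
begin

text \<open>The integrand splits as eta/sqrt Q = F' + R/sqrt Q, where
  F = ((2-p) k^(p-2) - (p+1) k^p) sqrt Q vanishes at the zeros beta, alpha of Q and
  R = p(1-p)(2p^2-2p-1) k^(p-1) - p^2(1-p)^2 (k^(p+1) + k^(p-3)) is negative because
  2p^2-2p-1 < 0 on (0,1); hence Upsilon = integral of R/sqrt Q < 0.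
  For integrability write Q(k) = h(k^2) with h(u) = a u^(1-p) - (1-p)^2 u - p^2 concave;
  a > a_* says exactly that h is positive at its critical point. Concavity then gives
  Q >= c (k-beta)(alpha-k) on [beta,alpha], and 1/sqrt((k-beta)(alpha-k)) is integrable with
  primitive arcsin((2k-beta-alpha)/(alpha-beta)).\<close>

lemma concave_on_subset: "concave_on T f \<Longrightarrow> S \<subseteq> T \<Longrightarrow> convex S \<Longrightarrow> concave_on S f"
  unfolding concave_on_def by (rule convex_on_subset)

lemma concave_on_powr:
  fixes r :: real assumes "0 \<le> r" "r \<le> 1"
  shows "concave_on {0<..} (\<lambda>x. x powr r)"
proof (rule f''_le0_imp_concave[where f' = "\<lambda>x. r * x powr (r - 1)"
      and f'' = "\<lambda>x. r * ((r - 1) * x powr (r - 1 - 1))"])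
  show "((\<lambda>x. x powr r) has_real_derivative r * x powr (r - 1)) (at x)" if "x \<in> {0<..}" for x
    using that by (auto intro!: derivative_eq_intros)
  show "((\<lambda>x. r * x powr (r - 1)) has_real_derivative r * ((r - 1) * x powr (r - 1 - 1))) (at x)"
    if "x \<in> {0<..}" for x
    using that by (auto intro!: derivative_eq_intros)
  show "r * ((r - 1) * x powr (r - 1 - 1)) \<le> 0" for x
    using assms by (intro mult_nonneg_nonpos mult_nonpos_nonneg) auto
qed simp

lemma concave_on_zeros_pos_between:
  fixes h :: "real \<Rightarrow> real"
  assumes "concave_on I h" "convex I" "B \<in> I" "A \<in> I" "U \<in> I"
    and "B < A" "h B = 0" "h A = 0" "0 < h U"
  shows "B < U" "U < A"
proof -
  have concave_Icc: "concave_on {x..y} h" if "x \<in> I" "y \<in> I" "x < y" for x y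
    using concave_on_subset[OF assms(1) atMostAtLeast_subset_convex[OF assms(2) that]] by simp
  show "U < A"
  proof (rule ccontr)
    assume "\<not> U < A"
    then have "A < U" using assms(8,9) by (cases "U = A") auto
    then have "(h U - h B) / (U - B) * (A - B) + h B \<le> h A"
      by (intro concave_onD_Icc'[OF concave_Icc[of B U]]) (use assms in auto)
    moreover have "(h U - h B) / (U - B) * (A - B) > 0"
      using assms \<open>A < U\<close> by simp
    ultimately show False using assms by simp
  qed
  show "B < U"
  proof (rule ccontr)
    assume "\<not> B < U"
    then have "U < B" using assms(7,9) by (cases "U = B") auto
    then have "(h U - h A) / (A - U) * (A - B) + h A \<le> h B"
      by (intro concave_onD_Icc''[OF concave_Icc[of U A]]) (use assms in auto)
    moreover have "(h U - h A) / (A - U) * (A - B) > 0"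
      using assms \<open>U < B\<close> by simp
    ultimately show False using assms by simp
  qed
qed

lemma concave_on_ge_quadratic:
  fixes h :: "real \<Rightarrow> real"
  assumes "concave_on {B..A} h" "h B = 0" "h A = 0" "B < U" "U < A" "0 \<le> h U" "u \<in> {B..A}"
  shows "h U * ((u - B) * (A - u) / (A - B)^2) \<le> h u"
proof (cases "u \<le> U")
  case True
  have "(u - B) * (A - u) / (A - B)^2 \<le> (u - B) * (A - B) / (A - B)^2"
    using assms by (intro divide_right_mono mult_left_mono) auto
  also have "\<dots> = (u - B) / (A - B)" by (simp add: power2_eq_square)
  also have "\<dots> \<le> (u - B) / (U - B)" using assms by (intro divide_left_mono) auto
  finally have "h U * ((u - B) * (A - u) / (A - B)^2) \<le> h U * ((u - B) / (U - B))"
    using assms(6) by (rule mult_left_mono)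
  also have "\<dots> \<le> h u"
  proof -
    have "concave_on {B..U} h" using concave_on_subset[OF assms(1)] assms by simp
    then show ?thesis using assms True concave_onD_Icc'[of B U h u] by simp
  qed
  finally show ?thesis .
next
  case False
  have "(u - B) * (A - u) / (A - B)^2 \<le> (A - B) * (A - u) / (A - B)^2"
    using assms by (intro divide_right_mono mult_right_mono) auto
  also have "\<dots> = (A - u) / (A - B)" by (simp add: power2_eq_square)
  also have "\<dots> \<le> (A - u) / (A - U)" using assms by (intro divide_left_mono) auto
  finally have "h U * ((u - B) * (A - u) / (A - B)^2) \<le> h U * ((A - u) / (A - U))"
    using assms(6) by (rule mult_left_mono)
  also have "\<dots> \<le> h u"
  proof -
    have "concave_on {U..A} h" using concave_on_subset[OF assms(1)] assms by simp
    then show ?thesis using assms False concave_onD_Icc''[of U A h u] by simp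
  qed
  finally show ?thesis .
qed

lemma has_real_derivative_arcsin_affine:
  fixes \<beta> \<alpha> k :: real assumes "\<beta> < k" "k < \<alpha>"
  shows "((\<lambda>k. arcsin ((2 * k - \<beta> - \<alpha>) / (\<alpha> - \<beta>))) has_real_derivative
           1 / sqrt ((k - \<beta>) * (\<alpha> - k))) (at k)"
proof -
  define x where "x = (2 * k - \<beta> - \<alpha>) / (\<alpha> - \<beta>)"
  have d: "0 < \<alpha> - \<beta>" "0 < (k - \<beta>) * (\<alpha> - k)" using assms by simp_all
  have "1 - x^2 = ((\<alpha> - \<beta>)^2 - (2 * k - \<beta> - \<alpha>)^2) / (\<alpha> - \<beta>)^2"
    using d(1) unfolding x_def power_divide by (simp add: diff_divide_distrib)
  also have "(\<alpha> - \<beta>)^2 - (2 * k - \<beta> - \<alpha>)^2 = 2^2 * ((k - \<beta>) * (\<alpha> - k))"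
    by (simp add: power2_eq_square algebra_simps)
  finally have one_minus: "1 - x^2 = 2^2 * ((k - \<beta>) * (\<alpha> - k)) / (\<alpha> - \<beta>)^2" .
  have "0 < 1 - x^2" unfolding one_minus using d by simp
  then have x: "-1 < x" "x < 1" by (auto simp: abs_square_less_1)
  have "((\<lambda>k. arcsin ((2 * k - \<beta> - \<alpha>) / (\<alpha> - \<beta>))) has_real_derivative
      inverse (sqrt (1 - x^2)) * (2 / (\<alpha> - \<beta>))) (at k)"
  proof (rule DERIV_chain2[of arcsin])
    show "(arcsin has_real_derivative inverse (sqrt (1 - x^2))) (at ((2 * k - \<beta> - \<alpha>) / (\<alpha> - \<beta>)))"
      using DERIV_arcsin[OF x] by (simp add: x_def)
    show "((\<lambda>k. (2 * k - \<beta> - \<alpha>) / (\<alpha> - \<beta>)) has_real_derivative 2 / (\<alpha> - \<beta>)) (at k)"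
      by (intro DERIV_cdivide) (auto intro!: derivative_eq_intros)
  qed
  moreover have "inverse (sqrt (1 - x^2)) * (2 / (\<alpha> - \<beta>)) = 1 / sqrt ((k - \<beta>) * (\<alpha> - k))"
  proof -
    have "sqrt (1 - x^2) = 2 * sqrt ((k - \<beta>) * (\<alpha> - k)) / (\<alpha> - \<beta>)"
      unfolding one_minus using d(1) by (simp add: real_sqrt_divide real_sqrt_mult)
    then show ?thesis using d by (simp add: field_simps)
  qed
  ultimately show ?thesis by simp
qed

lemma set_integrable_inverse_sqrt_quadratic:
  fixes \<beta> \<alpha> :: real assumes "\<beta> < \<alpha>"
  shows "set_integrable lborel (einterval \<beta> \<alpha>) (\<lambda>k. 1 / sqrt ((k - \<beta>) * (\<alpha> - k)))"
proof -
  define G where "G k = arcsin ((2 * k - \<beta> - \<alpha>) / (\<alpha> - \<beta>))" for k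
  have G: "continuous_on {\<beta>..\<alpha>} G"
    unfolding G_def using assms
    by (intro continuous_intros) (auto simp: field_simps)
  show ?thesis
  proof (rule interval_integral_FTC_nonneg(1)[where F = G and A = "G \<beta>" and B = "G \<alpha>"])
    show "((G \<circ> real_of_ereal) \<longlongrightarrow> G \<beta>) (at_right (ereal \<beta>))"
      unfolding ereal_tendsto_simps1 by (rule continuous_on_Icc_at_rightD[OF G assms])
    show "((G \<circ> real_of_ereal) \<longlongrightarrow> G \<alpha>) (at_left (ereal \<alpha>))"
      unfolding ereal_tendsto_simps1 by (rule continuous_on_Icc_at_leftD[OF G assms])
  qed (use assms has_real_derivative_arcsin_affine in \<open>auto simp: G_def[abs_def] intro!: continuous_intros\<close>)
qed

lemma set_integrable_div_sqrt_ge_quadratic: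
  fixes e q :: "real \<Rightarrow> real" and \<beta> \<alpha> c :: real
  assumes "\<beta> < \<alpha>" "0 < c" "continuous_on {\<beta>..\<alpha>} e" "continuous_on {\<beta><..<\<alpha>} q"
    and q: "\<And>k. k \<in> {\<beta><..<\<alpha>} \<Longrightarrow> c * ((k - \<beta>) * (\<alpha> - k)) \<le> q k"
  shows "set_integrable lborel (einterval \<beta> \<alpha>) (\<lambda>k. e k / sqrt (q k))"
proof -
  obtain C where C: "\<And>k. k \<in> {\<beta>..\<alpha>} \<Longrightarrow> norm (e k) \<le> C"
    using continuous_on_compact_bound[OF compact_Icc assms(3)] by auto
  have q_pos: "0 < q k" if "k \<in> {\<beta><..<\<alpha>}" for k
    using q[OF that] that assms(2) by (smt (verit) greaterThanLessThan_iff mult_pos_pos)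
  then have q_ne: "q k \<noteq> 0" if "k \<in> {\<beta><..<\<alpha>}" for k
    using that by force
  have bound: "norm (e k / sqrt (q k)) \<le> norm (C / sqrt c * (1 / sqrt ((k - \<beta>) * (\<alpha> - k))))"
    if k: "k \<in> {\<beta><..<\<alpha>}" for k
  proof -
    have X: "0 < (k - \<beta>) * (\<alpha> - k)" using k by simp
    then have cX: "0 < c * ((k - \<beta>) * (\<alpha> - k))" using assms(2) by simp
    have "norm (e k / sqrt (q k)) \<le> C / sqrt (q k)"
      using C[of k] k q_pos[OF k] by (simp add: abs_div divide_right_mono)
    also have "\<dots> \<le> C / sqrt (c * ((k - \<beta>) * (\<alpha> - k)))"
      using C[of k] k q[OF k] q_pos[OF k] cX by (intro divide_left_mono) auto
    also have "\<dots> = norm (C / sqrt c * (1 / sqrt ((k - \<beta>) * (\<alpha> - k))))"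
      using C[of k] k X assms(2) norm_ge_zero[of "e k"] by (simp add: real_sqrt_mult)
    finally show ?thesis .
  qed
  have "continuous_on {\<beta><..<\<alpha>} (\<lambda>k. e k / sqrt (q k))"
    using assms(4) q_ne
    by (intro continuous_intros continuous_on_subset[OF assms(3)]) auto
  then have measurable: "set_borel_measurable lborel (einterval \<beta> \<alpha>) (\<lambda>k. e k / sqrt (q k))"
    unfolding set_borel_measurable_def measurable_lborel2
    by (intro borel_measurable_continuous_on_indicator) auto
  have majorant: "set_integrable lborel (einterval \<beta> \<alpha>)
      (\<lambda>k. C / sqrt c * (1 / sqrt ((k - \<beta>) * (\<alpha> - k))))"
    using set_integrable_inverse_sqrt_quadratic[OF assms(1)] by (rule set_integrable_mult_right)
  show ?thesis
    using bound by (intro set_integrable_bound[OF majorant measurable] AE_I2) simp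
qed

lemma set_integral_neg:
  fixes f :: "'a \<Rightarrow> real"
  assumes "set_integrable M A f" "A \<in> sets M" "emeasure M A \<noteq> 0" "\<And>x. x \<in> A \<Longrightarrow> f x < 0"
  shows "(LINT x:A|M. f x) < 0"
proof -
  define g where "g x = indicator A x * - f x" for x
  have g: "integrable M g" "\<And>x. 0 \<le> g x"
    using assms(1,4) unfolding g_def mult_minus_right set_integrable_def
    by (auto simp: indicator_def less_imp_le)
  have integral_g: "integral\<^sup>L M g = - (LINT x:A|M. f x)"
    unfolding g_def[abs_def] set_lebesgue_integral_def by simp
  have "integral\<^sup>L M g \<noteq> 0"
  proof
    assume "integral\<^sup>L M g = 0"
    then have "AE x in M. g x = 0"
      using integral_nonneg_eq_0_iff_AE[OF g(1)] g(2) by simp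
    then have "AE x in M. x \<notin> A"
      by eventually_elim (use assms(4) in \<open>force simp: g_def\<close>)
    then show False
      using assms(3) sets.sets_into_space[OF assms(2)]
      by (subst (asm) AE_iff_measurable[OF assms(2)]) auto
  qed
  moreover have "0 \<le> integral\<^sup>L M g" using g(2) by (rule integral_nonneg_AE[OF AE_I2])
  ultimately show ?thesis using integral_g by linarith
qed

lemma Qpa_eq_powr_square:
  fixes p a \<kappa> :: real assumes "0 < \<kappa>"
  shows "Qpa p a \<kappa> = a * (\<kappa>^2) powr (1 - p) - (1 - p)^2 * \<kappa>^2 - p^2"
  using assms by (simp add: Qpa_def powr_powr flip: powr_numeral)

lemma concave_on_Qpa_square:
  fixes p a :: real assumes "0 \<le> p" "p \<le> 1" "0 \<le> a"
  shows "concave_on {0<..} (\<lambda>u. a * u powr (1 - p) - (1 - p)^2 * u - p^2)"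
proof -
  have "concave_on {0<..} (\<lambda>u. a * u powr (1 - p))"
    using assms concave_on_powr[of "1 - p"] by auto
  moreover have "convex_on {0<..} (\<lambda>u::real. (1 - p)^2 * u + p^2)"
    by (intro convex_on_add convex_on_cmul) (auto simp: convex_on_ident convex_on_const)
  ultimately show ?thesis
    using concave_on_diff by (fastforce simp: diff_diff_eq)
qed

lemma ex_pos_Qpa_square:
  fixes p a :: real assumes "0 < p" "p < 1" "a_star p < a"
  shows "\<exists>U>0. 0 < a * U powr (1 - p) - (1 - p)^2 * U - p^2"
proof -
  define r where "r = 1 - p"
  have r: "0 < r" "r < 1" using assms by (auto simp: r_def)
  have a: "0 < a" using assms(3) r by (auto simp: a_star_def r_def intro: le_less_trans[rotated])
  \<comment> \<open>the critical point of \<open>u \<mapsto> a u\<^sup>r - r\<^sup>2 u - p\<^sup>2\<close>\<close>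
  define U where "U = (a / r) powr (1 / p)"
  have U: "0 < U" "U powr p = a / r"
    using a r assms by (simp_all add: U_def powr_powr)
  have "a * U powr r = a * (U / U powr p)"
    using U by (simp add: r_def powr_diff)
  also have "\<dots> = r * U"
    using U a r by simp
  finally have aU: "a * U powr r = r * U" .
  have "(p / r) powr p = a_star p / r"
    using assms(1) r by (simp add: a_star_def r_def powr_divide powr_diff)
  also have "\<dots> < U powr p"
    using assms(3) r U by (simp add: divide_strict_right_mono)
  finally have "(p / r) powr p < U powr p" .
  then have "p / r < U"
    using powr_less_cancel2[OF assms(1) _ U(1)] assms(1) r by simp
  then have "p < r * U"
    using r by (simp add: field_simps)
  moreover have "a * U powr r - r^2 * U - p^2 = p * (r * U - p)"
    unfolding aU by (simp add: r_def power2_eq_square algebra_simps)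
  ultimately have "0 < a * U powr r - r^2 * U - p^2"
    using assms(1) by simp
  then show ?thesis using U(1) by (auto simp: r_def)
qed

lemma square_gaps_product_ge:
  fixes \<beta> \<alpha> \<kappa> :: real assumes "\<kappa> \<in> {\<beta>..\<alpha>}" "0 < \<beta>"
  shows "\<beta>^2 * ((\<kappa> - \<beta>) * (\<alpha> - \<kappa>)) \<le> (\<kappa>^2 - \<beta>^2) * (\<alpha>^2 - \<kappa>^2)"
proof -
  have "\<beta>^2 \<le> (\<kappa> + \<beta>) * (\<alpha> + \<kappa>)"
    using assms by (simp add: power2_eq_square mult_mono)
  then have "\<beta>^2 * ((\<kappa> - \<beta>) * (\<alpha> - \<kappa>)) \<le> ((\<kappa> + \<beta>) * (\<alpha> + \<kappa>)) * ((\<kappa> - \<beta>) * (\<alpha> - \<kappa>))"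
    using assms by (intro mult_right_mono) auto
  also have "\<dots> = (\<kappa>^2 - \<beta>^2) * (\<alpha>^2 - \<kappa>^2)"
    by (simp add: power2_eq_square algebra_simps)
  finally show ?thesis .
qed

lemma Qpa_ge_quadratic:
  fixes p a \<beta> \<alpha> :: real
  assumes "0 < p" "p < 1" "a_star p < a" "0 < \<beta>" "\<beta> < \<alpha>" "Qpa p a \<beta> = 0" "Qpa p a \<alpha> = 0"
  obtains c where "0 < c" "\<And>\<kappa>. \<kappa> \<in> {\<beta>..\<alpha>} \<Longrightarrow> c * ((\<kappa> - \<beta>) * (\<alpha> - \<kappa>)) \<le> Qpa p a \<kappa>"
proof -
  define h where "h u = a * u powr (1 - p) - (1 - p)^2 * u - p^2" for u
  have Q_h: "Qpa p a \<kappa> = h (\<kappa>^2)" if "0 < \<kappa>" for \<kappa>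
    using Qpa_eq_powr_square[OF that] by (simp add: h_def)
  have "0 \<le> a_star p" by (simp add: a_star_def)
  then have "0 \<le> a" using assms(3) by linarith
  then have concave: "concave_on {0<..} h"
    using concave_on_Qpa_square[of p a] assms(1,2) by (simp add: h_def[abs_def])
  obtain U where U: "0 < U" "0 < h U"
    using ex_pos_Qpa_square[OF assms(1-3)] by (auto simp: h_def)
  have zeros: "h (\<beta>^2) = 0" "h (\<alpha>^2) = 0" "\<beta>^2 < \<alpha>^2"
    using assms Q_h by (auto intro: power_strict_mono)
  have between: "\<beta>^2 < U" "U < \<alpha>^2"
    using concave_on_zeros_pos_between[OF concave _ _ _ _ zeros(3,1,2) U(2)] assms(4,5) U(1)
    by auto
  have "{\<beta>^2..\<alpha>^2} \<subseteq> {0<..}"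
    using assms(4) by (auto intro: less_le_trans[OF zero_less_power])
  then have concave_Icc: "concave_on {\<beta>^2..\<alpha>^2} h"
    by (intro concave_on_subset[OF concave]) auto
  define c where "c = h U * \<beta>^2 / (\<alpha>^2 - \<beta>^2)^2"
  show thesis
  proof
    show "0 < c" using U(2) assms(4) zeros(3) by (simp add: c_def)
    fix \<kappa> assume \<kappa>: "\<kappa> \<in> {\<beta>..\<alpha>}"
    have "\<beta>^2 * ((\<kappa> - \<beta>) * (\<alpha> - \<kappa>)) \<le> (\<kappa>^2 - \<beta>^2) * (\<alpha>^2 - \<kappa>^2)"
      using \<kappa> assms(4) by (rule square_gaps_product_ge)
    then have "h U / (\<alpha>^2 - \<beta>^2)^2 * (\<beta>^2 * ((\<kappa> - \<beta>) * (\<alpha> - \<kappa>)))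
        \<le> h U / (\<alpha>^2 - \<beta>^2)^2 * ((\<kappa>^2 - \<beta>^2) * (\<alpha>^2 - \<kappa>^2))"
      using U(2) by (intro mult_left_mono) auto
    then have "c * ((\<kappa> - \<beta>) * (\<alpha> - \<kappa>))
        \<le> h U * ((\<kappa>^2 - \<beta>^2) * (\<alpha>^2 - \<kappa>^2) / (\<alpha>^2 - \<beta>^2)^2)"
      by (simp add: c_def)
    also have "\<dots> \<le> h (\<kappa>^2)"
      using concave_on_ge_quadratic[OF concave_Icc zeros(1,2) between] U(2) \<kappa> assms(4)
      by (auto intro: power_mono)
    also have "\<dots> = Qpa p a \<kappa>" using Q_h \<kappa> assms(4) by simp
    finally show "c * ((\<kappa> - \<beta>) * (\<alpha> - \<kappa>)) \<le> Qpa p a \<kappa>" .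
  qed
qed

lemma powr_shifted_exponents:
  fixes k p :: real assumes "0 < k"
  shows "k powr (p + 1) = k powr p * k" "k powr (p - 1) = k powr p / k"
    "k powr (p - 2) = k powr p / k^2" "k powr (p - 3) = k powr p / k^3"
    "k powr (1 - p) = k / k powr p" "k powr (-1 - p) = 1 / (k * k powr p)"
    "k powr (2 * (1 - p)) = k^2 / (k powr p)^2" "k powr (2 * (1 - p) - 1) = k / (k powr p)^2"
proof -
  have sq: "k powr (2 * p) = (k powr p)^2"
    by (simp add: power2_eq_square flip: powr_add)
  show "k powr (p + 1) = k powr p * k" "k powr (p - 1) = k powr p / k"
    "k powr (p - 2) = k powr p / k^2" "k powr (p - 3) = k powr p / k^3"
    "k powr (1 - p) = k / k powr p"
    using assms by (simp_all add: powr_add powr_diff)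
  show "k powr (-1 - p) = 1 / (k * k powr p)"
    using assms by (simp add: powr_diff powr_minus divide_inverse)
  show "k powr (2 * (1 - p)) = k^2 / (k powr p)^2" "k powr (2 * (1 - p) - 1) = k / (k powr p)^2"
    using assms by (simp_all add: right_diff_distrib powr_diff sq)
qed

definition eta_residual :: "real \<Rightarrow> real \<Rightarrow> real" where
  "eta_residual p \<kappa> = p * (1 - p) * (2 * p^2 - 2 * p - 1) * \<kappa> powr (p - 1)
     - (1 - p)^2 * p^2 * \<kappa> powr (p + 1) - p^2 * (1 - p)^2 * \<kappa> powr (p - 3)"

definition Upsilon_primitive :: "real \<Rightarrow> real \<Rightarrow> real \<Rightarrow> real" where
  "Upsilon_primitive p a \<kappa> = ((2 - p) * \<kappa> powr (p - 2) - (p + 1) * \<kappa> powr p) * sqrt (Qpa p a \<kappa>)"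

text \<open>The left-hand side is \<open>F' \<surd>Q = G' Q + G Q'/2\<close> for \<open>F = G \<surd>Q\<close>, the primitive below.\<close>

lemma eta_minus_residual_eq:
  fixes p a \<kappa> :: real assumes "0 < \<kappa>"
  shows "((2 - p) * ((p - 2) * \<kappa> powr (p - 3)) - (p + 1) * (p * \<kappa> powr (p - 1))) * Qpa p a \<kappa>
      + ((2 - p) * \<kappa> powr (p - 2) - (p + 1) * \<kappa> powr p)
        * (a * (2 * (1 - p)) * \<kappa> powr (2 * (1 - p) - 1) - (1 - p)^2 * (2 * \<kappa>)) / 2
    = eta p a \<kappa> - eta_residual p \<kappa>"
proof -
  define y where "y = \<kappa> powr p"
  have "y > 0" using assms by (simp add: y_def)
  then show ?thesis
    using assms unfolding Qpa_def eta_def eta_residual_def powr_shifted_exponents[OF assms] y_def[symmetric]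
    by (simp add: field_simps) algebra
qed

lemma has_real_derivative_Upsilon_primitive:
  fixes p a \<kappa> :: real assumes "0 < \<kappa>" "0 < Qpa p a \<kappa>"
  shows "(Upsilon_primitive p a has_real_derivative
           (eta p a \<kappa> - eta_residual p \<kappa>) / sqrt (Qpa p a \<kappa>)) (at \<kappa>)"
proof -
  define G where "G = (2 - p) * \<kappa> powr (p - 2) - (p + 1) * \<kappa> powr p"
  define G' where "G' = (2 - p) * ((p - 2) * \<kappa> powr (p - 3)) - (p + 1) * (p * \<kappa> powr (p - 1))"
  define Q' where "Q' = a * (2 * (1 - p)) * \<kappa> powr (2 * (1 - p) - 1) - (1 - p)^2 * (2 * \<kappa>)"
  define s where "s = sqrt (Qpa p a \<kappa>)"
  have s: "0 < s" "s^2 = Qpa p a \<kappa>" using assms(2) by (simp_all add: s_def)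
  have "(Qpa p a has_real_derivative Q') (at \<kappa>)"
    unfolding Qpa_def[abs_def] Q'_def using assms(1) by (auto intro!: derivative_eq_intros)
  then have derivative: "(Upsilon_primitive p a has_real_derivative G' * s + G * (Q' / (2 * s))) (at \<kappa>)"
    unfolding Upsilon_primitive_def[abs_def] G_def G'_def s_def using assms
    by (auto intro!: derivative_eq_intros) (simp add: field_simps)
  have "G' * s + G * (Q' / (2 * s)) = (G' * s^2 + G * Q' / 2) / s"
    using s(1) by (simp add: field_simps power2_eq_square)
  also have "\<dots> = (eta p a \<kappa> - eta_residual p \<kappa>) / s"
    unfolding s(2) G_def G'_def Q'_def eta_minus_residual_eq[OF assms(1)] ..
  finally show ?thesis using derivative by (simp only: s_def)
qed

lemma isCont_Qpa: "0 < \<kappa> \<Longrightarrow> isCont (Qpa p a) \<kappa>"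
  unfolding Qpa_def[abs_def] by (intro continuous_intros) auto

lemma isCont_eta: "0 < \<kappa> \<Longrightarrow> isCont (eta p a) \<kappa>"
  unfolding eta_def[abs_def] by (intro continuous_intros) auto

lemma isCont_eta_residual: "0 < \<kappa> \<Longrightarrow> isCont (eta_residual p) \<kappa>"
  unfolding eta_residual_def[abs_def] by (intro continuous_intros) auto

lemma eta_residual_neg:
  fixes p \<kappa> :: real assumes "0 < p" "p < 1" "0 < \<kappa>"
  shows "eta_residual p \<kappa> < 0"
proof -
  have "p * p < p * 1" using assms by (intro mult_strict_left_mono) auto
  then have "2 * p^2 - 2 * p - 1 < 0" by (simp add: power2_eq_square)
  then have "p * (1 - p) * (2 * p^2 - 2 * p - 1) * \<kappa> powr (p - 1) < 0"
    using assms by (intro mult_neg_pos mult_pos_neg) auto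
  moreover have "0 < (1 - p)^2 * p^2 * \<kappa> powr (p + 1)" "0 < p^2 * (1 - p)^2 * \<kappa> powr (p - 3)"
    using assms by simp_all
  ultimately show ?thesis unfolding eta_residual_def by linarith
qed

lemma integral_eta_minus_residual_eq_0:
  fixes p a \<beta> \<alpha> :: real
  assumes "0 < \<beta>" "\<beta> < \<alpha>" "Qpa p a \<beta> = 0" "Qpa p a \<alpha> = 0"
    and Q_pos: "\<And>\<kappa>. \<kappa> \<in> {\<beta><..<\<alpha>} \<Longrightarrow> 0 < Qpa p a \<kappa>"
    and "set_integrable lborel (einterval \<beta> \<alpha>)
           (\<lambda>\<kappa>. (eta p a \<kappa> - eta_residual p \<kappa>) / sqrt (Qpa p a \<kappa>))"
  shows "(LBINT \<kappa>=\<beta>..\<alpha>. (eta p a \<kappa> - eta_residual p \<kappa>) / sqrt (Qpa p a \<kappa>)) = 0"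
proof -
  have primitive_cont: "isCont (Upsilon_primitive p a) \<kappa>" if "0 < \<kappa>" for \<kappa>
    unfolding Upsilon_primitive_def[abs_def] using that isCont_Qpa
    by (intro continuous_intros) auto
  have "(LBINT \<kappa>=\<beta>..\<alpha>. (eta p a \<kappa> - eta_residual p \<kappa>) / sqrt (Qpa p a \<kappa>))
      = Upsilon_primitive p a \<alpha> - Upsilon_primitive p a \<beta>"
  proof (rule interval_integral_FTC_integrable)
    fix \<kappa> assume "ereal \<beta> < ereal \<kappa>" "ereal \<kappa> < ereal \<alpha>"
    then have \<kappa>: "0 < \<kappa>" "0 < Qpa p a \<kappa>" using assms(1) Q_pos by auto
    show "(Upsilon_primitive p a has_vector_derivative
        (eta p a \<kappa> - eta_residual p \<kappa>) / sqrt (Qpa p a \<kappa>)) (at \<kappa>)"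
      using has_real_derivative_Upsilon_primitive[OF \<kappa>]
      by (simp add: has_real_derivative_iff_has_vector_derivative)
    show "isCont (\<lambda>\<kappa>. (eta p a \<kappa> - eta_residual p \<kappa>) / sqrt (Qpa p a \<kappa>)) \<kappa>"
      using \<kappa> isCont_Qpa isCont_eta isCont_eta_residual by (intro continuous_intros) auto
  next
    show "((Upsilon_primitive p a \<circ> real_of_ereal) \<longlongrightarrow> Upsilon_primitive p a \<beta>) (at_right (ereal \<beta>))"
      unfolding ereal_tendsto_simps1 using primitive_cont[of \<beta>] assms(1)
      by (simp add: isCont_def filterlim_at_split)
    show "((Upsilon_primitive p a \<circ> real_of_ereal) \<longlongrightarrow> Upsilon_primitive p a \<alpha>) (at_left (ereal \<alpha>))"
      unfolding ereal_tendsto_simps1 using primitive_cont[of \<alpha>] assms(1,2)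
      by (simp add: isCont_def filterlim_at_split)
  qed (use assms in auto)
  also have "\<dots> = 0" using assms(3,4) by (simp add: Upsilon_primitive_def)
  finally show ?thesis .
qed

theorem mainTheorem12:
  fixes p a \<beta> \<alpha> :: real
  assumes "0 < p" "p < 1" "a > a_star p"
    and "0 < \<beta>" "\<beta> < \<alpha>" "Qpa p a \<beta> = 0" "Qpa p a \<alpha> = 0"
  shows "Upsilon p a \<beta> \<alpha> < 0"
proof -
  obtain c where c: "0 < c" and Q_ge: "\<And>\<kappa>. \<kappa> \<in> {\<beta>..\<alpha>} \<Longrightarrow> c * ((\<kappa> - \<beta>) * (\<alpha> - \<kappa>)) \<le> Qpa p a \<kappa>"
    using Qpa_ge_quadratic[OF assms] by blast
  have Q_pos: "0 < Qpa p a \<kappa>" if "\<kappa> \<in> {\<beta><..<\<alpha>}" for \<kappa>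
    using Q_ge[of \<kappa>] that c by (smt (verit) greaterThanLessThan_iff atLeastAtMost_iff mult_pos_pos)
  have integrable: "set_integrable lborel (einterval \<beta> \<alpha>) (\<lambda>\<kappa>. f \<kappa> / sqrt (Qpa p a \<kappa>))"
    if "\<And>\<kappa>. 0 < \<kappa> \<Longrightarrow> isCont f \<kappa>" for f
    using assms(4) that isCont_Qpa Q_ge
    by (intro set_integrable_div_sqrt_ge_quadratic[OF assms(5) c] continuous_at_imp_continuous_on)
       auto
  define R where "R \<kappa> = eta_residual p \<kappa> / sqrt (Qpa p a \<kappa>)" for \<kappa>
  have "Upsilon p a \<beta> \<alpha>
      = (LBINT \<kappa>=\<beta>..\<alpha>. (eta p a \<kappa> - eta_residual p \<kappa>) / sqrt (Qpa p a \<kappa>))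
        + (LINT \<kappa>:einterval \<beta> \<alpha>|lborel. R \<kappa>)"
    using assms(5) integrable[OF isCont_eta] integrable[OF isCont_eta_residual]
    by (simp add: Upsilon_def R_def interval_lebesgue_integral_def diff_divide_distrib)
  also have "\<dots> = (LINT \<kappa>:einterval \<beta> \<alpha>|lborel. R \<kappa>)"
    using integral_eta_minus_residual_eq_0[OF assms(4-7) Q_pos]
      integrable[of "\<lambda>\<kappa>. eta p a \<kappa> - eta_residual p \<kappa>"] isCont_eta isCont_eta_residual
    by simp
  also have "\<dots> < 0"
    using assms(1,2,4,5) integrable[OF isCont_eta_residual] eta_residual_neg Q_pos
    by (intro set_integral_neg) (auto simp: R_def divide_neg_pos)
  finally show ?thesis .
qed

end
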